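(* Let $\mathcal{V}$ be a finite set of nodes, $\mathcal{F}$ a finite set of flows, each flow $f$ with rate $\lambda_f>0$ and path node set $\mathcal{V}_f\subseteq\mathcal{V}$, each node $v$ with capacity $c_v>0$, and assume $\max_f\lambda_f\le\min_v c_v$. Fix $\mathcal{U}\subseteq\mathcal{V}$ and let $OPT(Q2,\mathcal{U})$ be the optimal value of the relaxed allocation problem Q2 for $\mathcal{U}$ (defined in the context). Let $\pi_{\mathrm{MCA}}^{\mathcal{U}}$ be the total rate of the flows fully assigned to the nodes of $\mathcal{U}$ by the MCA algorithm (defined in the context). Then $\pi_{\mathrm{MCA}}^{\mathcal{U}}\ge\frac12\,OPT(Q2,\mathcal{U})$.
   Context: Problem Q2 for $\mathcal{U}$: maximize $\sum_{f\in\mathcal{F}}\sum_{v\in\mathcal{V}_f\cap\mathcal{U}}\lambda_f^v$ over nonnegative $(\lambda_f^v)$ subject to $\sum_{f}\lambda_f^v\le c_v$ for $v\in\mathcal{U}$, $\lambda_f^v=0$ for $v\notin\mathcal{U}$, and $\sum_{v\in\mathcal{U}}\lambda_f^v\le\lambda_f$ for all $f$. Write $\mathcal{U}_f=\mathcal{V}_f\cap\mathcal{U}$ and $\mathcal{F}_{\mathcal{U}}=\{f:\mathcal{U}_f\ne\emptyset\}$. A flow is fully assigned if parts of it summing to $\lambda_f$ are assigned to nodes of $\mathcal{U}_f$, without exceeding node capacities. MCA algorithm. Phase I: compute an optimal basic (extreme-point) solution $\boldsymbol{\lambda}_{\mathcal{U}}$ of Q2 and set $y_f^v=\lambda_f^v/\lambda_f$.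 Assign (fully, temporarily) each flow $f$ with $y_f^v=1$ to node $v$. Build the bipartite graph $G'$ having an edge $(f,v)$ of weight $y_f^v$ for each pair with $0<y_f^v<1$ (it is a forest). While $G'$ is nonempty: Step 1: while some node $v$ of $G'$ has exactly one incident edge $(f,v)$, let $r'_v$ be the total rate of flows currently fully assigned to $v$; if $r'_v\ge\lambda_f^v$ set $y_f^v=0$ and delete $v$ from $G'$; otherwise unassign the flows currently fully assigned to $v$, assign $f$ entirely to $v$ ($y_f^v=1$, cancelling all other fractions of $f$), and delete $v$, $f$ and their incident edges. Step 2: pick a node $v_1$ of $G'$ of degree at least two, two distinct incident edges of $v_1$, and the longest paths $p_1,p_2$ in $G'$ starting at $v_1$ through these edges; perturb the edge weights along $p_1$ and $p_2$ so that the rate changes $\lambda_f\Delta y_f^v$ on successive edges are $+\delta,-\delta,+\delta,\dots$ along $p_1$ and $-\delta,+\delta,-\delta,\dots$ along $p_2$ (starting at $v_1$), which preserves node loads, flow totals at interior vertices and the total assigned traffic; increase $\delta$ until some weight becomes $0$ or $1$, remove edges with weight $0$, and fully assign $f$ to $v$ when $y_f^v=1$; then return to Step 1. Phase II: for each flow of $\mathcal{F}_{\mathcal{U}}$ not yet assigned, if the total remaining capacity of the nodes in $\mathcal{U}_f$ is at least $\lambda_f$, split $f$ and fully assign it to a subset of $\mathcal{U}_f$ using remaining capacities. *)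

theory Defs
  imports Main "HOL-Library.Extended_Real" Complex_Main
begin

text \<open>An allocation x f v stands for the rate lambda_f^v of flow f assigned to node v.
  Only pairs with f in F and v in U intersected with V_f may carry traffic.\<close>

definition feasible_Q2 ::
  "'f set \<Rightarrow> 'v set \<Rightarrow> ('f \<Rightarrow> 'v set) \<Rightarrow> ('f \<Rightarrow> real) \<Rightarrow> ('v \<Rightarrow> real)
   \<Rightarrow> ('f \<Rightarrow> 'v \<Rightarrow> real) \<Rightarrow> bool" where
  "feasible_Q2 F U Vf lam c x \<longleftrightarrow>
     (\<forall>f v. 0 \<le> x f v) \<and>
     (\<forall>f v. (f \<notin> F \<or> v \<notin> U \<or> v \<notin> Vf f) \<longrightarrow> x f v = 0) \<and>
     (\<forall>v\<in>U. (\<Sum>f\<in>F. x f v) \<le> c v) \<and>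
     (\<forall>f\<in>F. (\<Sum>v\<in>U. x f v) \<le> lam f)"

definition obj_Q2 :: "'f set \<Rightarrow> 'v set \<Rightarrow> ('f \<Rightarrow> 'v set) \<Rightarrow> ('f \<Rightarrow> 'v \<Rightarrow> real) \<Rightarrow> real" where
  "obj_Q2 F U Vf x = (\<Sum>f\<in>F. \<Sum>v\<in>Vf f \<inter> U. x f v)"

definition OPT_Q2 ::
  "'f set \<Rightarrow> 'v set \<Rightarrow> ('f \<Rightarrow> 'v set) \<Rightarrow> ('f \<Rightarrow> real) \<Rightarrow> ('v \<Rightarrow> real) \<Rightarrow> real" where
  "OPT_Q2 F U Vf lam c = Sup (obj_Q2 F U Vf ` {x. feasible_Q2 F U Vf lam c x})"

definition optimal_Q2 where
  "optimal_Q2 F U Vf lam c x \<longleftrightarrow> feasible_Q2 F U Vf lam c x \<and>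
     (\<forall>x'. feasible_Q2 F U Vf lam c x' \<longrightarrow> obj_Q2 F U Vf x' \<le> obj_Q2 F U Vf x)"

definition extreme_Q2 where
  "extreme_Q2 F U Vf lam c x \<longleftrightarrow> feasible_Q2 F U Vf lam c x \<and>
     (\<forall>y z (t::real). feasible_Q2 F U Vf lam c y \<longrightarrow> feasible_Q2 F U Vf lam c z \<longrightarrow>
        0 < t \<longrightarrow> t < 1 \<longrightarrow> x = (\<lambda>f v. t * y f v + (1 - t) * z f v) \<longrightarrow> y = z)"

text \<open>The state of Phase I is the weight function y.  Flow f is fully (temporarily)
  assigned to v iff y f v = 1; the edges of G' are the pairs with 0 < y f v < 1.\<close>

definition mca_edges :: "'f set \<Rightarrow> 'v set \<Rightarrow> ('f \<Rightarrow> 'v \<Rightarrow> real) \<Rightarrow> ('f \<times> 'v) set" where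
  "mca_edges F U y = {(f, v). f \<in> F \<and> v \<in> U \<and> 0 < y f v \<and> y f v < 1}"

definition mca_load :: "'f set \<Rightarrow> ('f \<Rightarrow> real) \<Rightarrow> ('f \<Rightarrow> 'v \<Rightarrow> real) \<Rightarrow> 'v \<Rightarrow> real" where
  "mca_load F lam y v = (\<Sum>f\<in>{f\<in>F. y f v = 1}. lam f)"

definition mca_leaf where
  "mca_leaf F U y f v \<longleftrightarrow> {g. (g, v) \<in> mca_edges F U y} = {f}"

definition mca_step1 ::
  "'f set \<Rightarrow> 'v set \<Rightarrow> ('f \<Rightarrow> real) \<Rightarrow> ('f \<Rightarrow> 'v \<Rightarrow> real) \<Rightarrow> ('f \<Rightarrow> 'v \<Rightarrow> real) \<Rightarrow> bool" where
  "mca_step1 F U lam y y' \<longleftrightarrow>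
     (\<exists>f v. v \<in> U \<and> mca_leaf F U y f v \<and>
        (if lam f * y f v \<le> mca_load F lam y v
         then y' = y(f := (y f)(v := 0))
         else y' = (\<lambda>g w. if g = f then (if w = v then 1 else 0)
                          else if w = v \<and> y g v = 1 then 0 else y g w)))"

text \<open>Paths in G' starting at node v1, given as the list of their edges:
  v1 - f1 - v2 - f2 - ...; consecutive edges share alternately the flow and the node.\<close>
definition mca_path :: "'f set \<Rightarrow> 'v set \<Rightarrow> ('f \<Rightarrow> 'v \<Rightarrow> real) \<Rightarrow> 'v \<Rightarrow> ('f \<times> 'v) list \<Rightarrow> bool" where
  "mca_path F U y v1 p \<longleftrightarrow> p \<noteq> [] \<and> snd (hd p) = v1 \<and> distinct p \<and>
     set p \<subseteq> mca_edges F U y \<and>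
     (\<forall>i. Suc i < length p \<longrightarrow>
        (if even i then fst (p ! i) = fst (p ! Suc i) else snd (p ! i) = snd (p ! Suc i)))"

definition mca_longest_path where
  "mca_longest_path F U y v1 e p \<longleftrightarrow> mca_path F U y v1 p \<and> hd p = e \<and>
     (\<forall>q. mca_path F U y v1 q \<and> hd q = e \<longrightarrow> length q \<le> length p)"

text \<open>Rate changes +d,-d,+d,... along p1 and -d,+d,-d,... along p2; weights change by
  rate change divided by lam f.\<close>
definition mca_perturb ::
  "('f \<Rightarrow> real) \<Rightarrow> ('f \<Rightarrow> 'v \<Rightarrow> real) \<Rightarrow> real \<Rightarrow> ('f \<times> 'v) list \<Rightarrow> ('f \<times> 'v) list
   \<Rightarrow> ('f \<Rightarrow> 'v \<Rightarrow> real)" where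
  "mca_perturb lam y d p1 p2 = (\<lambda>f v. y f v +
     ((\<Sum>i<length p1. if p1 ! i = (f, v) then (-1) ^ i * d else 0) +
      (\<Sum>i<length p2. if p2 ! i = (f, v) then - ((-1) ^ i * d) else 0)) / lam f)"

definition mca_step2 ::
  "'f set \<Rightarrow> 'v set \<Rightarrow> ('f \<Rightarrow> real) \<Rightarrow> ('f \<Rightarrow> 'v \<Rightarrow> real) \<Rightarrow> ('f \<Rightarrow> 'v \<Rightarrow> real) \<Rightarrow> bool" where
  "mca_step2 F U lam y y' \<longleftrightarrow>
     (\<forall>f v. \<not> mca_leaf F U y f v) \<and>
     (\<exists>v1 f1 f2 p1 p2 d. f1 \<noteq> f2 \<and>
        mca_longest_path F U y v1 (f1, v1) p1 \<and> mca_longest_path F U y v1 (f2, v1) p2 \<and>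
        0 < d \<and> y' = mca_perturb lam y d p1 p2 \<and>
        (\<forall>(f, v) \<in> set p1 \<union> set p2. 0 \<le> y' f v \<and> y' f v \<le> 1) \<and>
        (\<exists>(f, v) \<in> set p1 \<union> set p2. y' f v = 0 \<or> y' f v = 1))"

definition mca_phase1_step where
  "mca_phase1_step F U lam y y' \<longleftrightarrow> mca_step1 F U lam y y' \<or> mca_step2 F U lam y y'"

definition mca_phase1 ::
  "'f set \<Rightarrow> 'v set \<Rightarrow> ('f \<Rightarrow> real) \<Rightarrow> ('f \<Rightarrow> 'v \<Rightarrow> real) \<Rightarrow> ('f \<Rightarrow> 'v \<Rightarrow> real) \<Rightarrow> bool" where
  "mca_phase1 F U lam x y \<longleftrightarrow>
     (mca_phase1_step F U lam)\<^sup>*\<^sup>* (\<lambda>f v. x f v / lam f) y \<and> mca_edges F U y = {}"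

text \<open>mca_phase2 U Vf lam fs rem S rem' S': processing the flows fs in order, starting with
  remaining capacities rem and set of fully assigned flows S, ends with rem' and S'.\<close>
inductive mca_phase2 ::
  "'v set \<Rightarrow> ('f \<Rightarrow> 'v set) \<Rightarrow> ('f \<Rightarrow> real) \<Rightarrow> 'f list \<Rightarrow> ('v \<Rightarrow> real) \<Rightarrow> 'f set
   \<Rightarrow> ('v \<Rightarrow> real) \<Rightarrow> 'f set \<Rightarrow> bool"
  for U Vf lam where
  nil: "mca_phase2 U Vf lam [] rem S rem S"
| skip: "(\<Sum>v\<in>Vf f \<inter> U. rem v) < lam f \<Longrightarrow> mca_phase2 U Vf lam fs rem S rem' S'
         \<Longrightarrow> mca_phase2 U Vf lam (f # fs) rem S rem' S'"
| assign: "lam f \<le> (\<Sum>v\<in>Vf f \<inter> U. rem v) \<Longrightarrow>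
           (\<forall>v. 0 \<le> a v \<and> a v \<le> rem v) \<Longrightarrow> (\<forall>v. v \<notin> Vf f \<inter> U \<longrightarrow> a v = 0) \<Longrightarrow>
           (\<Sum>v\<in>Vf f \<inter> U. a v) = lam f \<Longrightarrow>
           mca_phase2 U Vf lam fs (\<lambda>v. rem v - a v) (insert f S) rem' S'
         \<Longrightarrow> mca_phase2 U Vf lam (f # fs) rem S rem' S'"

end

theory Submission imports Defs begin

(* Along Phase I consider the potential
     sum_f lambda_f * sum_{v in U} y_f^v  +  sum of r'_v over the settled nodes,
   the settled nodes being the nodes of U without an edge of G'.  Initially it is at least
   OPT(Q2,U), and no step decreases it.  A Step 1 dropping the leaf edge (f,v) loses
   lambda_f y_f^v <= r'_v of weighted rate but settles v, which adds r'_v.  A Step 1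
   reassigning v displaces flows of total rate r'_v while raising f to its full rate, and
   settles v with the load lambda_f > r'_v.  A Step 2 keeps the weighted rate, and its weights
   stay feasible because G' lies in the support of the basic solution and therefore has no
   even cycle: longest paths from v_1 have odd length and end at a flow whose whole weight
   lies on their last edge.  When G' is empty all weights are 0 or 1 and every node is
   settled, so both terms of the potential are at most the rate of the flows fully assigned
   in Phase I, and Phase II only adds flows. *)

lemma sum_alternating_pairs:
  fixes h :: "nat \<Rightarrow> 'a::ring_1"
  assumes "a < b"
    and pairs: "\<And>i. a \<le> i \<Longrightarrow> Suc i < b \<Longrightarrow> even (i + k) \<Longrightarrow> h (Suc i) = h i"
  shows "(\<Sum>i=a..<b. (-1)^i * h i) =
    (if odd (a + k) then (-1)^a * h a else 0) +
    (if even (b - 1 + k) then (-1)^(b - 1) * h (b - 1) else 0)"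
proof -
  from \<open>a < b\<close> have "Suc a \<le> b" by simp
  then show ?thesis using pairs
  proof (induction b rule: dec_induct)
    case base
    then show ?case by auto
  next
    case (step n)
    have IH: "(\<Sum>i=a..<n. (-1)^i * h i) =
        (if odd (a + k) then (-1)^a * h a else 0) +
        (if even (n - 1 + k) then (-1)^(n - 1) * h (n - 1) else 0)"
      using step.IH step.prems by simp
    obtain m where n: "n = Suc m" using step.hyps by (cases n) auto
    show ?case
    proof (cases "even (n + k)")
      case True
      then show ?thesis using IH n step.hyps by simp
    next
      case False
      have "h n = h m" using step.prems[of m] step.hyps False n by simp
      then show ?thesis using IH False n step.hyps by simp
    qed
  qed
qed

(* Step 2 moves y along the alternating incidences of two paths; along an even cycle of G' the
   alternating incidence would be a feasible direction of Q2 in both senses. *)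
definition alt_incidence :: "('f \<times> 'v) list \<Rightarrow> nat set \<Rightarrow> 'f \<Rightarrow> 'v \<Rightarrow> real" where
  "alt_incidence p I f v = (\<Sum>i\<in>I. if p ! i = (f, v) then (-1)^i else 0)"

lemma sum_alt_incidence_nodes:
  assumes "finite U" and "\<forall>i\<in>I. snd (p ! i) \<in> U"
  shows "(\<Sum>v\<in>U. alt_incidence p I f v) = (\<Sum>i\<in>I. (-1)^i * (if fst (p ! i) = f then 1 else 0))"
proof -
  have "(\<Sum>v\<in>U. alt_incidence p I f v) = (\<Sum>i\<in>I. \<Sum>v\<in>U. if p ! i = (f, v) then (-1)^i else 0)"
    unfolding alt_incidence_def by (rule sum.swap)
  also have "\<dots> = (\<Sum>i\<in>I. (-1)^i * (if fst (p ! i) = f then 1 else 0))"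
    using assms by (intro sum.cong) (auto simp: prod_eq_iff)
  finally show ?thesis .
qed

lemma sum_alt_incidence_flows:
  assumes "finite F" and "\<forall>i\<in>I. fst (p ! i) \<in> F"
  shows "(\<Sum>f\<in>F. alt_incidence p I f v) = (\<Sum>i\<in>I. (-1)^i * (if snd (p ! i) = v then 1 else 0))"
proof -
  have "(\<Sum>f\<in>F. alt_incidence p I f v) = (\<Sum>i\<in>I. \<Sum>f\<in>F. if p ! i = (f, v) then (-1)^i else 0)"
    unfolding alt_incidence_def by (rule sum.swap)
  also have "\<dots> = (\<Sum>i\<in>I. (-1)^i * (if snd (p ! i) = v then 1 else 0))"
    using assms by (intro sum.cong) (auto simp: prod_eq_iff)
  finally show ?thesis .
qed

lemma alt_incidence_outside:
  assumes "I \<subseteq> {..<length p}" and "(f, v) \<notin> set p"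
  shows "alt_incidence p I f v = 0"
  unfolding alt_incidence_def using assms by (intro sum.neutral) (auto dest!: nth_mem)

lemma alt_incidence_nth:
  assumes "distinct p" and "I \<subseteq> {..<length p}" and "s \<in> I"
  shows "alt_incidence p I (fst (p ! s)) (snd (p ! s)) = (-1)^s"
proof -
  have "alt_incidence p I (fst (p ! s)) (snd (p ! s)) = (\<Sum>i\<in>I. if i = s then (-1)^i else 0)"
    unfolding alt_incidence_def using assms
    by (intro sum.cong) (auto simp: nth_eq_iff_index_eq subset_eq)
  also have "\<dots> = (-1)^s"
    using assms by (simp add: finite_subset)
  finally show ?thesis .
qed

lemma feasible_Q2_shift:
  fixes D :: "'f \<Rightarrow> 'v \<Rightarrow> real"
  assumes feas: "feasible_Q2 F U Vf lam c x"
    and small: "\<And>f v. \<bar>D f v\<bar> \<le> x f v"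
    and nodes: "\<And>v. v \<in> U \<Longrightarrow> (\<Sum>f\<in>F. D f v) = 0"
    and flows: "\<And>f. f \<in> F \<Longrightarrow> (\<Sum>v\<in>U. D f v) = 0"
  shows "feasible_Q2 F U Vf lam c (\<lambda>f v. x f v + D f v)"
  unfolding feasible_Q2_def
proof (intro conjI allI impI ballI)
  fix f v
  show "0 \<le> x f v + D f v" using small[of f v] by linarith
  assume "f \<notin> F \<or> v \<notin> U \<or> v \<notin> Vf f"
  then have "x f v = 0" using feas unfolding feasible_Q2_def by blast
  then show "x f v + D f v = 0" using small[of f v] by simp
next
  fix v assume "v \<in> U"
  then show "(\<Sum>f\<in>F. x f v + D f v) \<le> c v"
    using feas nodes unfolding feasible_Q2_def by (simp add: sum.distrib)
next
  fix f assume "f \<in> F"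
  then show "(\<Sum>v\<in>U. x f v + D f v) \<le> lam f"
    using feas flows unfolding feasible_Q2_def by (simp add: sum.distrib)
qed

lemma extreme_Q2_balanced_zero:
  fixes D :: "'f \<Rightarrow> 'v \<Rightarrow> real"
  assumes ext: "extreme_Q2 F U Vf lam c x" and "finite F" "finite U"
    and supp: "\<And>f v. D f v \<noteq> 0 \<Longrightarrow> 0 < x f v"
    and nodes: "\<And>v. v \<in> U \<Longrightarrow> (\<Sum>f\<in>F. D f v) = 0"
    and flows: "\<And>f. f \<in> F \<Longrightarrow> (\<Sum>v\<in>U. D f v) = 0"
  shows "D f v = 0"
proof (rule ccontr)
  assume nz: "D f v \<noteq> 0"
  have feas: "feasible_Q2 F U Vf lam c x" using ext unfolding extreme_Q2_def by blast
  have in_FU: "(g, w) \<in> F \<times> U" if "D g w \<noteq> 0" for g w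
    using supp[OF that] feas unfolding feasible_Q2_def by (metis less_irrefl mem_Sigma_iff)
  define P where "P = {(g, w) \<in> F \<times> U. D g w \<noteq> 0}"
  define eps where "eps = Min ((\<lambda>(g, w). x g w / \<bar>D g w\<bar>) ` P)"
  have "finite P"
    using \<open>finite F\<close> \<open>finite U\<close> by (rule finite_subset[rotated, OF finite_SigmaI]) (auto simp: P_def)
  have "(f, v) \<in> P" using nz in_FU unfolding P_def by blast
  have "0 < eps"
    unfolding eps_def using \<open>finite P\<close> \<open>(f, v) \<in> P\<close> supp
    by (subst Min_gr_iff) (auto simp: P_def)
  have small: "\<bar>t * eps * D g w\<bar> \<le> x g w" if "\<bar>t\<bar> = 1" for t g w
  proof (cases "D g w = 0")
    case True
    then show ?thesis using feas unfolding feasible_Q2_def by simp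
  next
    case False
    then have "(g, w) \<in> P" using in_FU unfolding P_def by blast
    then have "eps \<le> x g w / \<bar>D g w\<bar>"
      unfolding eps_def using \<open>finite P\<close> by (intro Min_le) auto
    then show ?thesis using False \<open>0 < eps\<close> that by (simp add: abs_mult field_simps)
  qed
  have shifted: "feasible_Q2 F U Vf lam c (\<lambda>g w. x g w + t * eps * D g w)" if "\<bar>t\<bar> = 1" for t
    using feas small[OF that] by (rule feasible_Q2_shift)
      (simp_all add: nodes flows sum_distrib_left[symmetric])
  have midpoint: "x = (\<lambda>g w. 1/2 * (x g w + 1 * eps * D g w) + (1 - 1/2) * (x g w + (-1) * eps * D g w))"
    by (simp add: algebra_simps)
  have "\<And>y z (t::real). feasible_Q2 F U Vf lam c y \<Longrightarrow> feasible_Q2 F U Vf lam c z \<Longrightarrow>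
      0 < t \<Longrightarrow> t < 1 \<Longrightarrow> x = (\<lambda>f v. t * y f v + (1 - t) * z f v) \<Longrightarrow> y = z"
    using ext unfolding extreme_Q2_def by blast
  from this[OF shifted[of 1] shifted[of "-1"] _ _ midpoint]
  have "(\<lambda>g w. x g w + 1 * eps * D g w) = (\<lambda>g w. x g w + (-1) * eps * D g w)"
    by simp
  then have "eps * D f v = - eps * D f v" by (metis add_left_cancel mult_1 mult_minus1)
  then show False using nz \<open>0 < eps\<close> by simp
qed

lemma mca_path_alternates:
  assumes "mca_path F U y v1 p" and "Suc i < length p"
  shows "if even i then fst (p ! i) = fst (p ! Suc i) else snd (p ! i) = snd (p ! Suc i)"
  using assms unfolding mca_path_def by blast

lemma mca_path_edges:
  assumes "mca_path F U y v1 p" and "i < length p"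
  shows "p ! i \<in> mca_edges F U y" "fst (p ! i) \<in> F" "snd (p ! i) \<in> U"
  using assms nth_mem unfolding mca_path_def mca_edges_def by fastforce+

lemma mca_path_flow_sum:
  assumes "mca_path F U y v1 p" and "a < b" and "b \<le> length p"
  shows "(\<Sum>i=a..<b. (-1)^i * (if fst (p ! i) = f then 1 else 0 :: real)) =
    (if odd a then (-1)^a * (if fst (p ! a) = f then 1 else 0) else 0) +
    (if even (b - 1) then (-1)^(b - 1) * (if fst (p ! (b - 1)) = f then 1 else 0) else 0)"
proof -
  have "(if fst (p ! Suc i) = f then 1 else 0) = (if fst (p ! i) = f then 1 else 0 :: real)"
    if "a \<le> i" "Suc i < b" "even (i + 0)" for i
    using mca_path_alternates[OF assms(1), of i] that assms(3) by simp
  from sum_alternating_pairs[where k = 0 and h = "\<lambda>i. if fst (p ! i) = f then 1 else 0", OF \<open>a < b\<close> this]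
  show ?thesis by (simp only: add_0_right)
qed

lemma mca_path_node_sum:
  assumes "mca_path F U y v1 p" and "a < b" and "b \<le> length p"
  shows "(\<Sum>i=a..<b. (-1)^i * (if snd (p ! i) = v then 1 else 0 :: real)) =
    (if even a then (-1)^a * (if snd (p ! a) = v then 1 else 0) else 0) +
    (if odd (b - 1) then (-1)^(b - 1) * (if snd (p ! (b - 1)) = v then 1 else 0) else 0)"
proof -
  have "(if snd (p ! Suc i) = v then 1 else 0) = (if snd (p ! i) = v then 1 else 0 :: real)"
    if "a \<le> i" "Suc i < b" "even (i + 1)" for i
    using mca_path_alternates[OF assms(1), of i] that assms(3) by simp
  from sum_alternating_pairs[where k = 1 and h = "\<lambda>i. if snd (p ! i) = v then 1 else 0", OF \<open>a < b\<close> this]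
  moreover have "odd (a + 1) = even a" "even (b - 1 + 1) = odd (b - 1)" by simp_all
  ultimately show ?thesis by (simp only:)
qed

lemma mca_path_last:
  assumes "mca_path F U y v1 p"
  shows "last p \<in> mca_edges F U y"
  using assms unfolding mca_path_def by (metis last_in_set subsetD)

(* Paths of G' start at a node, so after an odd number of edges they end at a flow and after
   an even number at a node; the edges at that end are the candidates for extending the path. *)
definition at_path_end :: "('f \<times> 'v) list \<Rightarrow> 'f \<times> 'v \<Rightarrow> bool" where
  "at_path_end p e \<longleftrightarrow> (if odd (length p) then fst e = fst (last p) else snd e = snd (last p))"

lemma mca_path_snoc:
  assumes path: "mca_path F U y v1 p" and e: "e \<in> mca_edges F U y" "e \<notin> set p"
    and "at_path_end p e"
  shows "mca_path F U y v1 (p @ [e])"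
  unfolding mca_path_def
proof (intro conjI allI impI)
  have "p \<noteq> []" using path unfolding mca_path_def by blast
  then show "snd (hd (p @ [e])) = v1" using path unfolding mca_path_def by simp
  show "distinct (p @ [e])" "set (p @ [e]) \<subseteq> mca_edges F U y"
    using path e unfolding mca_path_def by auto
  fix i assume i: "Suc i < length (p @ [e])"
  show "if even i then fst ((p @ [e]) ! i) = fst ((p @ [e]) ! Suc i)
        else snd ((p @ [e]) ! i) = snd ((p @ [e]) ! Suc i)"
  proof (cases "Suc i < length p")
    case True
    then show ?thesis using mca_path_alternates[OF path] by (simp add: nth_append)
  next
    case False
    with i have "length p = Suc i" by simp
    moreover from this have "last p = p ! i" using \<open>p \<noteq> []\<close> by (simp add: last_conv_nth)
    ultimately show ?thesis using \<open>at_path_end p e\<close>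
      by (auto simp: at_path_end_def nth_append)
  qed
qed simp

lemma mca_path_cycle_sums:
  assumes path: "mca_path F U y v1 p" and "s < n" and "n \<le> length p" and parity: "even s = even n"
    and closing: "if odd n then fst (p ! s) = fst (p ! (n - 1)) else snd (p ! s) = snd (p ! (n - 1))"
  shows "(\<Sum>i=s..<n. (-1)^i * (if fst (p ! i) = f then 1 else 0 :: real)) = 0"
    and "(\<Sum>i=s..<n. (-1)^i * (if snd (p ! i) = v then 1 else 0 :: real)) = 0"
proof -
  have "even (n - 1) \<longleftrightarrow> odd n" using \<open>s < n\<close> by (cases n) auto
  then show "(\<Sum>i=s..<n. (-1)^i * (if fst (p ! i) = f then 1 else 0 :: real)) = 0"
    and "(\<Sum>i=s..<n. (-1)^i * (if snd (p ! i) = v then 1 else 0 :: real)) = 0"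
    using mca_path_flow_sum[OF path \<open>s < n\<close> \<open>n \<le> length p\<close>, of f]
      mca_path_node_sum[OF path \<open>s < n\<close> \<open>n \<le> length p\<close>, of v] parity closing
    by (auto split: if_splits)
qed

(* The edges from p!j (or p!(j+1), to fix the parity) to the end of p form an even cycle. *)
lemma extreme_Q2_path_not_closing:
  assumes ext: "extreme_Q2 F U Vf lam c x" and "finite F" "finite U"
    and path: "mca_path F U y v1 p" and supp: "\<forall>(f, v)\<in>set p. 0 < x f v"
    and j: "Suc j < length p" and closing: "at_path_end p (p ! j)"
  shows False
proof -
  define n where "n = length p"
  define s where "s = (if even j = even n then j else Suc j)"
  have "s < n" and parity: "even s = even n" using j by (auto simp: s_def n_def)
  have "p \<noteq> []" using j by auto
  then have last: "last p = p ! (n - 1)" by (simp add: last_conv_nth n_def)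
  have "if odd n then fst (p ! s) = fst (p ! (n - 1)) else snd (p ! s) = snd (p ! (n - 1))"
    using closing mca_path_alternates[OF path, of j] j
    by (auto simp: at_path_end_def s_def n_def last)
  note cycle = mca_path_cycle_sums[OF path \<open>s < n\<close> _ parity this, unfolded n_def, simplified]
  define D where "D = alt_incidence p {s..<n}"
  have I: "{s..<n} \<subseteq> {..<length p}" by (auto simp: n_def)
  have "D (fst (p ! s)) (snd (p ! s)) = 0"
    using ext \<open>finite F\<close> \<open>finite U\<close>
  proof (rule extreme_Q2_balanced_zero)
    fix f v assume "D f v \<noteq> 0"
    then have "(f, v) \<in> set p" using alt_incidence_outside[OF I] unfolding D_def by blast
    then show "0 < x f v" using supp by blast
  next
    fix v
    show "(\<Sum>f\<in>F. D f v) = 0"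
      unfolding D_def using \<open>finite F\<close> mca_path_edges[OF path] I cycle
      by (subst sum_alt_incidence_flows) (auto simp: n_def)
  next
    fix f
    show "(\<Sum>v\<in>U. D f v) = 0"
      unfolding D_def using \<open>finite U\<close> mca_path_edges[OF path] I cycle
      by (subst sum_alt_incidence_nodes) (auto simp: n_def)
  qed
  moreover have "D (fst (p ! s)) (snd (p ! s)) = (-1)^s"
    unfolding D_def using path I \<open>s < n\<close> by (intro alt_incidence_nth) (auto simp: mca_path_def)
  ultimately show False by simp
qed

lemma mca_perturb_eq:
  "mca_perturb lam y d p1 p2 f v =
     y f v + d * (alt_incidence p1 {..<length p1} f v - alt_incidence p2 {..<length p2} f v) / lam f"
proof -
  have "(\<Sum>i<length q. if q ! i = (f, v) then (-1)^i * d else 0) = d * alt_incidence q {..<length q} f v"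
    and "(\<Sum>i<length q. if q ! i = (f, v) then - ((-1)^i * d) else 0) = - d * alt_incidence q {..<length q} f v"
    for q
    unfolding alt_incidence_def sum_distrib_left by (auto intro!: sum.cong)
  then show ?thesis unfolding mca_perturb_def by (simp add: right_diff_distrib)
qed

lemma mca_perturb_outside:
  assumes "(f, v) \<notin> set p1" and "(f, v) \<notin> set p2"
  shows "mca_perturb lam y d p1 p2 f v = y f v"
  using assms by (simp add: mca_perturb_eq alt_incidence_outside)

lemma odd_mca_path_row_sum:
  assumes path: "mca_path F U y v1 p" and "odd (length p)" and "finite U"
  shows "(\<Sum>v\<in>U. alt_incidence p {..<length p} f v) = (if fst (last p) = f then 1 else 0)"
proof -
  have "0 < length p" using odd_pos[OF \<open>odd (length p)\<close>] .
  have "(\<Sum>v\<in>U. alt_incidence p {..<length p} f v) =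
      (\<Sum>i=0..<length p. (-1)^i * (if fst (p ! i) = f then 1 else 0))"
    using \<open>finite U\<close> mca_path_edges(3)[OF path]
    by (simp add: sum_alt_incidence_nodes atLeast0LessThan)
  also have "\<dots> = (if fst (last p) = f then 1 else 0)"
    using mca_path_flow_sum[OF path \<open>0 < length p\<close> order_refl] \<open>odd (length p)\<close> \<open>0 < length p\<close>
    by (simp add: last_conv_nth)
  finally show ?thesis .
qed

definition reassign :: "('f \<Rightarrow> 'v \<Rightarrow> real) \<Rightarrow> 'f \<Rightarrow> 'v \<Rightarrow> 'f \<Rightarrow> 'v \<Rightarrow> real" where
  "reassign y f v = (\<lambda>g w. if g = f then (if w = v then 1 else 0)
                            else if w = v \<and> y g v = 1 then 0 else y g w)"

lemma mca_leaf_edge: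
  assumes "mca_leaf F U y f v"
  shows "(f, v) \<in> mca_edges F U y" and "\<And>g. (g, v) \<in> mca_edges F U y \<Longrightarrow> g = f"
  using assms unfolding mca_leaf_def by auto

lemma mca_edges_reassign: "mca_edges F U (reassign y f v) \<subseteq> mca_edges F U y"
  unfolding mca_edges_def reassign_def by auto

locale mca_run =
  fixes F :: "'f set" and U :: "'v set" and Vf :: "'f \<Rightarrow> 'v set"
    and lam :: "'f \<Rightarrow> real" and c :: "'v \<Rightarrow> real" and x :: "'f \<Rightarrow> 'v \<Rightarrow> real"
  assumes finite_F: "finite F" and finite_U: "finite U"
    and lam_pos: "\<And>f. f \<in> F \<Longrightarrow> 0 < lam f"
    and extreme: "extreme_Q2 F U Vf lam c x"
begin

lemma feasible: "feasible_Q2 F U Vf lam c x"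
  using extreme unfolding extreme_Q2_def by blast

definition assigned_rate :: "('f \<Rightarrow> 'v \<Rightarrow> real) \<Rightarrow> real" where
  "assigned_rate y = (\<Sum>f\<in>F. \<Sum>v\<in>U. lam f * y f v)"

definition settled_nodes :: "('f \<Rightarrow> 'v \<Rightarrow> real) \<Rightarrow> 'v set" where
  "settled_nodes y = {v \<in> U. \<forall>f. (f, v) \<notin> mca_edges F U y}"

definition potential :: "('f \<Rightarrow> 'v \<Rightarrow> real) \<Rightarrow> real" where
  "potential y = assigned_rate y + (\<Sum>v\<in>settled_nodes y. mca_load F lam y v)"

(* The last conjunct keeps G' inside the support of x, where extremality rules out even cycles. *)
definition valid_weights :: "('f \<Rightarrow> 'v \<Rightarrow> real) \<Rightarrow> bool" where
  "valid_weights y \<longleftrightarrow>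
     (\<forall>f\<in>F. \<forall>v\<in>U. 0 \<le> y f v \<and> y f v \<le> 1) \<and> (\<forall>f\<in>F. (\<Sum>v\<in>U. y f v) \<le> 1) \<and>
     (\<forall>(f, v)\<in>mca_edges F U y. 0 < x f v)"

lemma valid_weights_le_one:
  assumes "valid_weights y" and "f \<in> F" and "u \<in> U" "w \<in> U" "u \<noteq> w"
  shows "y f u + y f w \<le> 1"
proof -
  have "(\<Sum>v\<in>{u, w}. y f v) \<le> (\<Sum>v\<in>U. y f v)"
    using assms finite_U by (intro sum_mono2) (auto simp: valid_weights_def)
  moreover have "(\<Sum>v\<in>U. y f v) \<le> 1" using assms unfolding valid_weights_def by blast
  ultimately show ?thesis using \<open>u \<noteq> w\<close> by simp
qed

lemma valid_weights_decrease:
  assumes valid: "valid_weights y" and edges: "mca_edges F U y' \<subseteq> mca_edges F U y"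
    and le: "\<And>g w. g \<in> F \<Longrightarrow> w \<in> U \<Longrightarrow> 0 \<le> y' g w \<and> y' g w \<le> y g w"
  shows "valid_weights y'"
  unfolding valid_weights_def
proof (intro conjI ballI)
  fix g assume "g \<in> F"
  then have "(\<Sum>w\<in>U. y' g w) \<le> (\<Sum>w\<in>U. y g w)" using le by (intro sum_mono) auto
  also have "\<dots> \<le> 1" using valid \<open>g \<in> F\<close> unfolding valid_weights_def by blast
  finally show "(\<Sum>w\<in>U. y' g w) \<le> 1" .
  fix w assume "w \<in> U"
  then have "y g w \<le> 1" using valid \<open>g \<in> F\<close> unfolding valid_weights_def by blast
  then show "0 \<le> y' g w" "y' g w \<le> 1" using le[OF \<open>g \<in> F\<close> \<open>w \<in> U\<close>] by linarith+
next
  fix e assume "e \<in> mca_edges F U y'"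
  then show "case e of (g, w) \<Rightarrow> 0 < x g w" using valid edges unfolding valid_weights_def by blast
qed

lemma mca_load_eq: "mca_load F lam y v = (\<Sum>g\<in>F. if y g v = 1 then lam g else 0)"
  unfolding mca_load_def using finite_F by (simp add: sum.inter_filter)

lemma mca_load_nonneg: "0 \<le> mca_load F lam y v"
  unfolding mca_load_def using lam_pos by (auto intro!: sum_nonneg simp: less_imp_le)

lemma assigned_rate_update:
  assumes "f \<in> F" and "v \<in> U"
  shows "assigned_rate (y(f := (y f)(v := t))) = assigned_rate y + lam f * (t - y f v)"
proof -
  have "assigned_rate (y(f := (y f)(v := t))) =
      (\<Sum>g\<in>F. \<Sum>w\<in>U. lam g * y g w + (if g = f \<and> w = v then lam f * (t - y f v) else 0))"
    unfolding assigned_rate_def by (intro sum.cong) (auto simp: algebra_simps)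
  also have "\<dots> = assigned_rate y + (\<Sum>g\<in>F. if g = f then lam f * (t - y f v) else 0)"
  proof -
    have "(\<Sum>w\<in>U. if g = f \<and> w = v then r else 0) = (if g = f then r else 0)" for g and r :: real
      using \<open>v \<in> U\<close> finite_U by (cases "g = f") simp_all
    then show ?thesis unfolding assigned_rate_def sum.distrib by simp
  qed
  also have "\<dots> = assigned_rate y + lam f * (t - y f v)"
    using \<open>f \<in> F\<close> finite_F by simp
  finally show ?thesis .
qed

lemma settled_load_mono:
  assumes same: "\<And>g w. w \<in> settled_nodes y \<Longrightarrow> y' g w = y g w"
    and new: "N \<subseteq> settled_nodes y' - settled_nodes y"
  shows "(\<Sum>w\<in>settled_nodes y. mca_load F lam y w) + (\<Sum>w\<in>N. mca_load F lam y' w)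
      \<le> (\<Sum>w\<in>settled_nodes y'. mca_load F lam y' w)"
proof -
  have sub: "settled_nodes y \<subseteq> settled_nodes y'"
    using same unfolding settled_nodes_def mca_edges_def by auto
  have fin: "finite (settled_nodes y')" using finite_U unfolding settled_nodes_def by simp
  have "(\<Sum>w\<in>settled_nodes y. mca_load F lam y w) = (\<Sum>w\<in>settled_nodes y. mca_load F lam y' w)"
    using same unfolding mca_load_def by simp
  moreover have "(\<Sum>w\<in>N. mca_load F lam y' w) \<le> (\<Sum>w\<in>settled_nodes y' - settled_nodes y. mca_load F lam y' w)"
    using new fin by (intro sum_mono2) (auto simp: mca_load_nonneg)
  moreover have "(\<Sum>w\<in>settled_nodes y'. mca_load F lam y' w) =
      (\<Sum>w\<in>settled_nodes y' - settled_nodes y. mca_load F lam y' w) + (\<Sum>w\<in>settled_nodes y. mca_load F lam y' w)"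
    using sum.subset_diff[OF sub fin] .
  ultimately show ?thesis by linarith
qed

lemma settled_load_leaf:
  assumes leaf: "mca_leaf F U y f v"
    and edges: "mca_edges F U y' \<subseteq> mca_edges F U y" and "(f, v) \<notin> mca_edges F U y'"
    and same: "\<And>g w. w \<in> settled_nodes y \<Longrightarrow> y' g w = y g w"
  shows "(\<Sum>w\<in>settled_nodes y. mca_load F lam y w) + mca_load F lam y' v
      \<le> (\<Sum>w\<in>settled_nodes y'. mca_load F lam y' w)"
proof -
  have fv: "(f, v) \<in> mca_edges F U y" and only: "\<And>g. (g, v) \<in> mca_edges F U y \<Longrightarrow> g = f"
    using mca_leaf_edge[OF leaf] by blast+
  have "v \<notin> settled_nodes y" using fv unfolding settled_nodes_def by blast
  moreover have "v \<in> settled_nodes y'"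
    unfolding settled_nodes_def
  proof (intro CollectI conjI allI notI)
    show "v \<in> U" using fv by (simp add: mca_edges_def)
    fix g assume "(g, v) \<in> mca_edges F U y'"
    moreover from this have "g = f" using edges only by blast
    ultimately show False using \<open>(f, v) \<notin> mca_edges F U y'\<close> by simp
  qed
  ultimately show ?thesis using settled_load_mono[of y y' "{v}"] same by simp
qed

lemma longest_path_end:
  assumes valid: "valid_weights y" and longest: "mca_longest_path F U y v1 e p"
    and e': "e' \<in> mca_edges F U y" and "at_path_end p e'"
  shows "e' = last p"
proof (rule ccontr)
  assume "e' \<noteq> last p"
  have path: "mca_path F U y v1 p" using longest unfolding mca_longest_path_def by blast
  show False
  proof (cases "e' \<in> set p")
    case False
    have "mca_path F U y v1 (p @ [e'])"
      using path e' False \<open>at_path_end p e'\<close> by (rule mca_path_snoc)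
    moreover have "p \<noteq> []" using path unfolding mca_path_def by blast
    ultimately show False using longest unfolding mca_longest_path_def by fastforce
  next
    case True
    then obtain j where j: "j < length p" "e' = p ! j" by (auto simp: in_set_conv_nth)
    with \<open>e' \<noteq> last p\<close> have "Suc j < length p"
      by (metis Suc_lessI diff_Suc_1 last_conv_nth list.size(3) not_less0)
    moreover have "\<forall>(f, v)\<in>set p. 0 < x f v"
      using path valid unfolding mca_path_def valid_weights_def by blast
    ultimately show False
      using extreme_Q2_path_not_closing[OF extreme finite_F finite_U path] \<open>at_path_end p e'\<close> j
      by blast
  qed
qed

lemma longest_path_odd:
  assumes valid: "valid_weights y" and no_leaf: "\<forall>f v. \<not> mca_leaf F U y f v"
    and longest: "mca_longest_path F U y v1 e p"
  shows "odd (length p)"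
proof (rule ccontr)
  assume even: "\<not> odd (length p)"
  have path: "mca_path F U y v1 p" using longest unfolding mca_longest_path_def by blast
  obtain g u where last: "last p = (g, u)" by fastforce
  have "(g, u) \<in> mca_edges F U y" using mca_path_last[OF path] last by simp
  with no_leaf obtain h where "(h, u) \<in> mca_edges F U y" "h \<noteq> g"
    unfolding mca_leaf_def by blast
  moreover from this have "(h, u) = last p"
    using longest_path_end[OF valid longest] even last by (simp add: at_path_end_def)
  ultimately show False using last by simp
qed

lemma longest_path_last_flow:
  assumes valid: "valid_weights y" and longest: "mca_longest_path F U y v1 e p"
    and "odd (length p)" and w: "w \<in> U" "w \<noteq> snd (last p)"
  shows "y (fst (last p)) w = 0"
proof -
  have path: "mca_path F U y v1 p" using longest unfolding mca_longest_path_def by blast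
  obtain g u where last: "last p = (g, u)" by fastforce
  have "(g, u) \<in> mca_edges F U y" using mca_path_last[OF path] last by simp
  then have "g \<in> F" "u \<in> U" "0 < y g u" unfolding mca_edges_def by auto
  have "y g w \<noteq> 1"
    using valid_weights_le_one[OF valid \<open>g \<in> F\<close> \<open>u \<in> U\<close> w(1)] w(2) last \<open>0 < y g u\<close> by auto
  moreover have "(g, w) \<notin> mca_edges F U y"
  proof
    assume "(g, w) \<in> mca_edges F U y"
    then have "(g, w) = last p"
      using longest_path_end[OF valid longest] \<open>odd (length p)\<close> last by (simp add: at_path_end_def)
    then show False using w(2) last by simp
  qed
  ultimately show ?thesis
    using valid \<open>g \<in> F\<close> w(1) last unfolding valid_weights_def mca_edges_def by force
qed

lemma perturb_row_sum:
  assumes path1: "mca_path F U y v1 p1" and path2: "mca_path F U y v2 p2"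
    and "odd (length p1)" "odd (length p2)"
  shows "(\<Sum>v\<in>U. mca_perturb lam y d p1 p2 f v) = (\<Sum>v\<in>U. y f v) +
    d * ((if fst (last p1) = f then 1 else 0) - (if fst (last p2) = f then 1 else 0)) / lam f"
proof -
  have "(\<Sum>v\<in>U. mca_perturb lam y d p1 p2 f v) = (\<Sum>v\<in>U. y f v) +
      d * ((\<Sum>v\<in>U. alt_incidence p1 {..<length p1} f v) - (\<Sum>v\<in>U. alt_incidence p2 {..<length p2} f v)) / lam f"
    by (simp add: mca_perturb_eq sum.distrib sum_divide_distrib[symmetric] sum_subtractf
        sum_distrib_left[symmetric])
  then show ?thesis
    using odd_mca_path_row_sum[OF path1 _ finite_U] odd_mca_path_row_sum[OF path2 _ finite_U] assms
    by simp
qed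

lemma assigned_rate_perturb:
  assumes path1: "mca_path F U y v1 p1" and path2: "mca_path F U y v2 p2"
    and odd: "odd (length p1)" "odd (length p2)"
  shows "assigned_rate (mca_perturb lam y d p1 p2) = assigned_rate y"
proof -
  have ends: "fst (last p1) \<in> F" "fst (last p2) \<in> F"
    using mca_path_last[OF path1] mca_path_last[OF path2] unfolding mca_edges_def by auto
  have "assigned_rate (mca_perturb lam y d p1 p2) = (\<Sum>f\<in>F. lam f * (\<Sum>v\<in>U. mca_perturb lam y d p1 p2 f v))"
    unfolding assigned_rate_def by (simp add: sum_distrib_left)
  also have "\<dots> = (\<Sum>f\<in>F. lam f * (\<Sum>v\<in>U. y f v) +
      d * ((if fst (last p1) = f then 1 else 0) - (if fst (last p2) = f then 1 else 0)))"
    using perturb_row_sum[OF path1 path2 odd] lam_pos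
    by (intro sum.cong) (auto simp: distrib_left less_imp_neq[symmetric])
  also have "\<dots> = (\<Sum>f\<in>F. lam f * (\<Sum>v\<in>U. y f v)) +
      d * ((\<Sum>f\<in>F. if fst (last p1) = f then 1 else 0) - (\<Sum>f\<in>F. if fst (last p2) = f then 1 else 0))"
    by (simp add: sum.distrib sum_subtractf flip: sum_distrib_left)
  also have "\<dots> = assigned_rate y"
    using ends finite_F by (simp add: assigned_rate_def sum_distrib_left)
  finally show ?thesis .
qed

lemma perturb_row_le_one:
  assumes valid: "valid_weights y" and "f \<in> F" and "0 < d"
    and longest1: "mca_longest_path F U y v1 e1 p1" and longest2: "mca_longest_path F U y v2 e2 p2"
    and odd: "odd (length p1)" "odd (length p2)"
    and end_bound: "mca_perturb lam y d p1 p2 (fst (last p1)) (snd (last p1)) \<le> 1"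
  shows "(\<Sum>v\<in>U. mca_perturb lam y d p1 p2 f v) \<le> 1"
proof -
  have path1: "mca_path F U y v1 p1" and path2: "mca_path F U y v2 p2"
    using longest1 longest2 unfolding mca_longest_path_def by blast+
  show ?thesis
  proof (cases "f = fst (last p1)")
    case True
    have "mca_perturb lam y d p1 p2 f w = 0" if "w \<in> U" "w \<noteq> snd (last p1)" for w
    proof -
      have "y f w = 0" using longest_path_last_flow[OF valid longest1 odd(1) that] True by simp
      then have "(f, w) \<notin> mca_edges F U y" by (simp add: mca_edges_def)
      then have "(f, w) \<notin> set p1" "(f, w) \<notin> set p2"
        using path1 path2 unfolding mca_path_def by blast+
      then show ?thesis using mca_perturb_outside[of f w p1 p2] \<open>y f w = 0\<close> by simp
    qed
    then have "(\<Sum>v\<in>U. mca_perturb lam y d p1 p2 f v) =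
        (\<Sum>v\<in>U. if v = snd (last p1) then mca_perturb lam y d p1 p2 f (snd (last p1)) else 0)"
      by (intro sum.cong) auto
    also have "\<dots> = mca_perturb lam y d p1 p2 f (snd (last p1))"
      using mca_path_last[OF path1] finite_U by (auto simp: mca_edges_def)
    finally show ?thesis using end_bound True by simp
  next
    case False
    have "0 \<le> d * (if fst (last p2) = f then 1 else 0) / lam f"
      using \<open>0 < d\<close> lam_pos[OF \<open>f \<in> F\<close>] by simp
    then have "(\<Sum>v\<in>U. mca_perturb lam y d p1 p2 f v) \<le> (\<Sum>v\<in>U. y f v)"
      using perturb_row_sum[OF path1 path2 odd, of d f] False by simp
    also have "\<dots> \<le> 1" using valid \<open>f \<in> F\<close> unfolding valid_weights_def by blast
    finally show ?thesis .
  qed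
qed

lemma step2_preserves:
  assumes valid: "valid_weights y" and step: "mca_step2 F U lam y y'"
  shows "valid_weights y' \<and> potential y \<le> potential y'"
proof -
  obtain v1 f1 f2 p1 p2 d where no_leaf: "\<forall>f v. \<not> mca_leaf F U y f v"
    and longest1: "mca_longest_path F U y v1 (f1, v1) p1"
    and longest2: "mca_longest_path F U y v1 (f2, v1) p2"
    and "0 < d" and y': "y' = mca_perturb lam y d p1 p2"
    and bounds: "\<forall>(f, v) \<in> set p1 \<union> set p2. 0 \<le> y' f v \<and> y' f v \<le> 1"
    using step unfolding mca_step2_def by blast
  have path1: "mca_path F U y v1 p1" and path2: "mca_path F U y v1 p2"
    using longest1 longest2 unfolding mca_longest_path_def by blast+
  have odd: "odd (length p1)" "odd (length p2)"
    using longest_path_odd[OF valid no_leaf] longest1 longest2 by blast+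
  have on_edges: "y' f v = y f v" if "(f, v) \<notin> mca_edges F U y" for f v
  proof -
    have "(f, v) \<notin> set p1" "(f, v) \<notin> set p2"
      using that path1 path2 unfolding mca_path_def by blast+
    then show ?thesis unfolding y' by (rule mca_perturb_outside)
  qed
  have edges: "mca_edges F U y' \<subseteq> mca_edges F U y"
    using on_edges unfolding mca_edges_def by force
  have entries: "0 \<le> y' f v \<and> y' f v \<le> 1" if "f \<in> F" "v \<in> U" for f v
  proof (cases "(f, v) \<in> set p1 \<union> set p2")
    case True
    with bounds show ?thesis by blast
  next
    case False
    then have "y' f v = y f v" unfolding y' by (simp add: mca_perturb_outside)
    with valid that show ?thesis unfolding valid_weights_def by simp
  qed
  have "(fst (last p1), snd (last p1)) \<in> set p1 \<union> set p2"
    using path1 unfolding mca_path_def by simp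
  with bounds have "y' (fst (last p1)) (snd (last p1)) \<le> 1" by blast
  then have rows: "(\<Sum>v\<in>U. y' f v) \<le> 1" if "f \<in> F" for f
    using perturb_row_le_one[OF valid that \<open>0 < d\<close> longest1 longest2 odd] unfolding y' by blast
  have "\<forall>(f, v)\<in>mca_edges F U y'. 0 < x f v"
    using edges valid unfolding valid_weights_def by blast
  with entries rows have "valid_weights y'" unfolding valid_weights_def by blast
  moreover have "w \<in> settled_nodes y \<Longrightarrow> y' g w = y g w" for g w
    using on_edges unfolding settled_nodes_def by blast
  then have "potential y \<le> potential y'"
    using settled_load_mono[of y y' "{}"] assigned_rate_perturb[OF path1 path2 odd]
    unfolding potential_def y' by simp
  ultimately show ?thesis ..
qed

lemma drop_leaf_edge:
  assumes valid: "valid_weights y" and leaf: "mca_leaf F U y f v"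
    and small: "lam f * y f v \<le> mca_load F lam y v"
  defines "y' \<equiv> y(f := (y f)(v := 0))"
  shows "valid_weights y'" and "potential y \<le> potential y'"
proof -
  have y': "y' g w = (if g = f \<and> w = v then 0 else y g w)" for g w unfolding y'_def by simp
  have fv: "(f, v) \<in> mca_edges F U y" using mca_leaf_edge[OF leaf] by blast
  then have "f \<in> F" "v \<in> U" "y f v < 1" by (simp_all add: mca_edges_def)
  have edges: "mca_edges F U y' \<subseteq> mca_edges F U y" unfolding mca_edges_def y' by auto
  show "valid_weights y'"
    using valid edges by (rule valid_weights_decrease) (use valid in \<open>auto simp: y' valid_weights_def\<close>)
  have "assigned_rate y' = assigned_rate y - lam f * y f v"
    unfolding y'_def using assigned_rate_update[OF \<open>f \<in> F\<close> \<open>v \<in> U\<close>, of y 0] by simp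
  moreover have "{g \<in> F. y' g v = 1} = {g \<in> F. y g v = 1}"
    using \<open>y f v < 1\<close> by (auto simp: y')
  then have "mca_load F lam y' v = mca_load F lam y v" unfolding mca_load_def by simp
  moreover have "(\<Sum>w\<in>settled_nodes y. mca_load F lam y w) + mca_load F lam y' v
      \<le> (\<Sum>w\<in>settled_nodes y'. mca_load F lam y' w)"
    using leaf edges by (rule settled_load_leaf) (use fv in \<open>auto simp: y' mca_edges_def settled_nodes_def\<close>)
  ultimately show "potential y \<le> potential y'" using small unfolding potential_def by linarith
qed

lemma reassign_valid:
  assumes valid: "valid_weights y" and "f \<in> F" and "v \<in> U"
  shows "valid_weights (reassign y f v)"
  unfolding valid_weights_def
proof (intro conjI ballI)
  fix g assume "g \<in> F"
  show "(\<Sum>w\<in>U. reassign y f v g w) \<le> 1"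
  proof (cases "g = f")
    case True
    then show ?thesis using \<open>v \<in> U\<close> finite_U by (simp add: reassign_def)
  next
    case False
    then have "(\<Sum>w\<in>U. reassign y f v g w) \<le> (\<Sum>w\<in>U. y g w)"
      using valid \<open>g \<in> F\<close> by (intro sum_mono) (auto simp: reassign_def valid_weights_def)
    also have "\<dots> \<le> 1" using valid \<open>g \<in> F\<close> unfolding valid_weights_def by blast
    finally show ?thesis .
  qed
  fix w assume "w \<in> U"
  then have "0 \<le> y g w \<and> y g w \<le> 1" using valid \<open>g \<in> F\<close> unfolding valid_weights_def by blast
  then show "0 \<le> reassign y f v g w" "reassign y f v g w \<le> 1" by (auto simp: reassign_def)
next
  fix e assume "e \<in> mca_edges F U (reassign y f v)"
  then show "case e of (g, w) \<Rightarrow> 0 < x g w"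
    using valid mca_edges_reassign[of F U y f v] unfolding valid_weights_def by blast
qed

lemma assigned_rate_reassign:
  assumes valid: "valid_weights y" and "f \<in> F" and "v \<in> U" and "y f v \<noteq> 1"
  shows "assigned_rate y \<le> assigned_rate (reassign y f v) + mca_load F lam y v"
proof -
  have "(\<Sum>w\<in>U. lam g * y g w) \<le> (\<Sum>w\<in>U. lam g * reassign y f v g w) + (if y g v = 1 then lam g else 0)"
    if "g \<in> F" for g
  proof (cases "g = f")
    case True
    have "(\<Sum>w\<in>U. lam g * y g w) = lam f * (\<Sum>w\<in>U. y f w)" by (simp add: sum_distrib_left True)
    also have "\<dots> \<le> lam f"
      using valid \<open>f \<in> F\<close> lam_pos[OF \<open>f \<in> F\<close>] unfolding valid_weights_def by (simp add: mult_left_le)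
    also have "\<dots> = (\<Sum>w\<in>U. lam g * reassign y f v g w)"
      using True \<open>v \<in> U\<close> finite_U by (simp add: reassign_def flip: sum_distrib_left)
    finally show ?thesis using True \<open>y f v \<noteq> 1\<close> by simp
  next
    case False
    have "(\<Sum>w\<in>U. lam g * y g w) =
        (\<Sum>w\<in>U. lam g * reassign y f v g w + (if w = v then (if y g v = 1 then lam g else 0) else 0))"
      using False by (intro sum.cong) (auto simp: reassign_def)
    also have "\<dots> = (\<Sum>w\<in>U. lam g * reassign y f v g w) + (if y g v = 1 then lam g else 0)"
      using \<open>v \<in> U\<close> finite_U by (simp add: sum.distrib)
    finally show ?thesis by simp
  qed
  then have "assigned_rate y \<le> (\<Sum>g\<in>F. (\<Sum>w\<in>U. lam g * reassign y f v g w) + (if y g v = 1 then lam g else 0))"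
    unfolding assigned_rate_def by (rule sum_mono)
  also have "\<dots> = assigned_rate (reassign y f v) + mca_load F lam y v"
    by (simp add: assigned_rate_def mca_load_eq sum.distrib)
  finally show ?thesis .
qed

lemma reassign_leaf:
  assumes valid: "valid_weights y" and leaf: "mca_leaf F U y f v"
    and large: "mca_load F lam y v < lam f * y f v"
  defines "y' \<equiv> reassign y f v"
  shows "valid_weights y'" and "potential y \<le> potential y'"
proof -
  have fv: "(f, v) \<in> mca_edges F U y" using mca_leaf_edge[OF leaf] by blast
  then have "f \<in> F" "v \<in> U" "0 < y f v" "y f v < 1" by (simp_all add: mca_edges_def)
  show "valid_weights y'" unfolding y'_def using valid \<open>f \<in> F\<close> \<open>v \<in> U\<close> by (rule reassign_valid)
  have "{g \<in> F. y' g v = 1} = {f}" using \<open>f \<in> F\<close> by (auto simp: y'_def reassign_def)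
  then have "mca_load F lam y' v = lam f" unfolding mca_load_def by simp
  moreover have "lam f * y f v \<le> lam f"
    using \<open>y f v < 1\<close> lam_pos[OF \<open>f \<in> F\<close>] by (simp add: mult_left_le)
  moreover have "(\<Sum>w\<in>settled_nodes y. mca_load F lam y w) + mca_load F lam y' v
      \<le> (\<Sum>w\<in>settled_nodes y'. mca_load F lam y' w)"
    using leaf
  proof (rule settled_load_leaf)
    show "mca_edges F U y' \<subseteq> mca_edges F U y" unfolding y'_def by (rule mca_edges_reassign)
    show "(f, v) \<notin> mca_edges F U y'" by (simp add: y'_def reassign_def mca_edges_def)
    fix g w assume "w \<in> settled_nodes y"
    then have "w \<in> U" "w \<noteq> v" "(f, w) \<notin> mca_edges F U y"
      using fv unfolding settled_nodes_def by auto
    moreover have "y f v + y f w \<le> 1"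
      using valid_weights_le_one[OF valid \<open>f \<in> F\<close> \<open>v \<in> U\<close> \<open>w \<in> U\<close>] \<open>w \<noteq> v\<close> by simp
    moreover have "0 \<le> y f w" using valid \<open>f \<in> F\<close> \<open>w \<in> U\<close> unfolding valid_weights_def by blast
    ultimately have "y f w = 0" using \<open>0 < y f v\<close> \<open>f \<in> F\<close> unfolding mca_edges_def by auto
    then show "y' g w = y g w" using \<open>w \<noteq> v\<close> by (simp add: y'_def reassign_def)
  qed
  ultimately show "potential y \<le> potential y'"
    using large assigned_rate_reassign[OF valid \<open>f \<in> F\<close> \<open>v \<in> U\<close>] \<open>y f v < 1\<close>
    unfolding potential_def y'_def by fastforce
qed

lemma step1_preserves:
  assumes valid: "valid_weights y" and step: "mca_step1 F U lam y y'"
  shows "valid_weights y' \<and> potential y \<le> potential y'"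
proof -
  obtain f v where leaf: "mca_leaf F U y f v"
    and y': "if lam f * y f v \<le> mca_load F lam y v then y' = y(f := (y f)(v := 0)) else y' = reassign y f v"
    using step unfolding mca_step1_def reassign_def by blast
  show ?thesis
  proof (cases "lam f * y f v \<le> mca_load F lam y v")
    case True
    then show ?thesis using drop_leaf_edge[OF valid leaf] y' by simp
  next
    case False
    then show ?thesis using reassign_leaf[OF valid leaf] y' by simp
  qed
qed

lemma phase1_preserves:
  assumes "(mca_phase1_step F U lam)\<^sup>*\<^sup>* y0 y" and "valid_weights y0"
  shows "valid_weights y \<and> potential y0 \<le> potential y"
  using assms
proof (induction rule: rtranclp_induct)
  case base
  then show ?case by simp
next
  case (step y1 y2)
  then have "valid_weights y2 \<and> potential y1 \<le> potential y2"
    using step1_preserves step2_preserves unfolding mca_phase1_step_def by blast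
  with step.IH step.prems show ?case by auto
qed

lemma initial_weights:
  shows "valid_weights (\<lambda>f v. x f v / lam f)"
    and "obj_Q2 F U Vf x \<le> potential (\<lambda>f v. x f v / lam f)"
proof -
  have x: "0 \<le> x f v" "f \<notin> F \<or> v \<notin> U \<or> v \<notin> Vf f \<Longrightarrow> x f v = 0"
    "f \<in> F \<Longrightarrow> (\<Sum>v\<in>U. x f v) \<le> lam f"
    for f v using feasible unfolding feasible_Q2_def by auto
  show "valid_weights (\<lambda>f v. x f v / lam f)"
    unfolding valid_weights_def
  proof (intro conjI ballI)
    fix f assume "f \<in> F"
    then show "(\<Sum>v\<in>U. x f v / lam f) \<le> 1"
      using x(3) lam_pos by (simp add: sum_divide_distrib[symmetric])
    fix v assume "v \<in> U"
    have "x f v \<le> (\<Sum>v\<in>U. x f v)" by (rule member_le_sum[OF \<open>v \<in> U\<close> _ finite_U]) (simp add: x)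
    then have "x f v \<le> lam f" using x(3)[OF \<open>f \<in> F\<close>] by linarith
    then show "0 \<le> x f v / lam f" "x f v / lam f \<le> 1"
      using x(1) lam_pos[OF \<open>f \<in> F\<close>] by simp_all
  next
    fix e assume "e \<in> mca_edges F U (\<lambda>f v. x f v / lam f)"
    then obtain f v where "e = (f, v)" "f \<in> F" "0 < x f v / lam f" unfolding mca_edges_def by auto
    then show "case e of (f, v) \<Rightarrow> 0 < x f v"
      using lam_pos[OF \<open>f \<in> F\<close>] by (simp add: zero_less_divide_iff)
  qed
  have "obj_Q2 F U Vf x = (\<Sum>f\<in>F. \<Sum>v\<in>U. x f v)"
    unfolding obj_Q2_def using finite_U x(2)
    by (intro sum.cong refl sum.mono_neutral_left) auto
  also have "\<dots> = assigned_rate (\<lambda>f v. x f v / lam f)"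
    unfolding assigned_rate_def using lam_pos by (intro sum.cong) (auto simp: less_imp_neq[symmetric])
  also have "\<dots> \<le> potential (\<lambda>f v. x f v / lam f)"
    unfolding potential_def by (simp add: sum_nonneg mca_load_nonneg)
  finally show "obj_Q2 F U Vf x \<le> potential (\<lambda>f v. x f v / lam f)" .
qed

lemma final_potential:
  assumes valid: "valid_weights y" and no_edges: "mca_edges F U y = {}"
  shows "potential y \<le> 2 * (\<Sum>f\<in>{f \<in> F. \<exists>v\<in>U. y f v = 1}. lam f)"
proof -
  have integral: "y g w = 0 \<or> y g w = 1" if "g \<in> F" "w \<in> U" for g w
    using no_edges valid that unfolding mca_edges_def valid_weights_def by force
  have "settled_nodes y = U" using no_edges unfolding settled_nodes_def by simp
  then have "(\<Sum>w\<in>settled_nodes y. mca_load F lam y w) = (\<Sum>g\<in>F. \<Sum>w\<in>U. if y g w = 1 then lam g else 0)"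
    by (simp add: mca_load_eq sum.swap[of _ U])
  also have "\<dots> = assigned_rate y"
    unfolding assigned_rate_def using integral by (intro sum.cong refl) force
  finally have "potential y = 2 * assigned_rate y" unfolding potential_def by simp
  also have "assigned_rate y \<le> (\<Sum>g\<in>F. if \<exists>v\<in>U. y g v = 1 then lam g else 0)"
    unfolding assigned_rate_def
  proof (rule sum_mono)
    fix g assume "g \<in> F"
    show "(\<Sum>w\<in>U. lam g * y g w) \<le> (if \<exists>v\<in>U. y g v = 1 then lam g else 0)"
    proof (cases "\<exists>v\<in>U. y g v = 1")
      case True
      have "(\<Sum>w\<in>U. lam g * y g w) = lam g * (\<Sum>w\<in>U. y g w)" by (simp add: sum_distrib_left)
      also have "\<dots> \<le> lam g"
        using valid \<open>g \<in> F\<close> lam_pos[OF \<open>g \<in> F\<close>] unfolding valid_weights_def by (simp add: mult_left_le)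
      finally show ?thesis using True by simp
    next
      case False
      then have "\<forall>w\<in>U. y g w = 0" using integral \<open>g \<in> F\<close> by blast
      then show ?thesis by simp
    qed
  qed
  also have "\<dots> = (\<Sum>f\<in>{f \<in> F. \<exists>v\<in>U. y f v = 1}. lam f)"
    using finite_F by (simp add: sum.inter_filter)
  finally show ?thesis by simp
qed

end

lemma OPT_Q2_optimal:
  assumes "optimal_Q2 F U Vf lam c x"
  shows "OPT_Q2 F U Vf lam c = obj_Q2 F U Vf x"
  unfolding OPT_Q2_def
  using assms unfolding optimal_Q2_def by (intro cSup_eq_maximum) auto

lemma mca_phase2_assigned:
  assumes "mca_phase2 U Vf lam fs rem S0 rem' S"
  shows "S0 \<subseteq> S" and "S \<subseteq> S0 \<union> set fs"
  using assms by (induction rule: mca_phase2.induct) auto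

theorem lemma4:
  fixes V :: "'v set" and F :: "'f set" and Vf :: "'f \<Rightarrow> 'v set"
    and lam :: "'f \<Rightarrow> real" and c :: "'v \<Rightarrow> real" and U :: "'v set"
    and x y :: "'f \<Rightarrow> 'v \<Rightarrow> real" and fs :: "'f list"
    and rem' :: "'v \<Rightarrow> real" and S :: "'f set"
  assumes "finite V" and "finite F"
    and "\<forall>f\<in>F. 0 < lam f" and "\<forall>f\<in>F. Vf f \<subseteq> V" and "\<forall>v\<in>V. 0 < c v"
    and "\<forall>f\<in>F. \<forall>v\<in>V. lam f \<le> c v"
    and "U \<subseteq> V"
    and "optimal_Q2 F U Vf lam c x" and "extreme_Q2 F U Vf lam c x"
    and "mca_phase1 F U lam x y"
    and "distinct fs"
    and "set fs = {f \<in> F. Vf f \<inter> U \<noteq> {} \<and> \<not> (\<exists>v\<in>U. y f v = 1)}"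
    and "mca_phase2 U Vf lam fs (\<lambda>v. c v - mca_load F lam y v) {f \<in> F. \<exists>v\<in>U. y f v = 1} rem' S"
  shows "(\<Sum>f\<in>S. lam f) \<ge> OPT_Q2 F U Vf lam c / 2"
proof -
  interpret mca_run F U Vf lam c x
    using assms(1-3,7,9) finite_subset by unfold_locales auto
  have run: "(mca_phase1_step F U lam)\<^sup>*\<^sup>* (\<lambda>f v. x f v / lam f) y" "mca_edges F U y = {}"
    using assms(10) unfolding mca_phase1_def by blast+
  note phase1 = phase1_preserves[OF run(1) initial_weights(1)]
  let ?F1 = "{f \<in> F. \<exists>v\<in>U. y f v = 1}"
  have "?F1 \<subseteq> S" "S \<subseteq> F" using mca_phase2_assigned[OF assms(13)] assms(12) by auto
  have "OPT_Q2 F U Vf lam c = obj_Q2 F U Vf x" using assms(8) by (rule OPT_Q2_optimal)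
  also have "\<dots> \<le> potential (\<lambda>f v. x f v / lam f)" by (rule initial_weights(2))
  also have "\<dots> \<le> potential y" using phase1 by blast
  also have "\<dots> \<le> 2 * (\<Sum>f\<in>?F1. lam f)" using phase1 run(2) final_potential by blast
  also have "\<dots> \<le> 2 * (\<Sum>f\<in>S. lam f)"
    using \<open>?F1 \<subseteq> S\<close> \<open>S \<subseteq> F\<close> assms(2,3)
    by (auto intro!: sum_mono2 intro: finite_subset less_imp_le)
  finally show ?thesis by simp
qed

end
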